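(* For every integer $m\geq 1$, the graph $\mathcal{G}^2_{4m+1}$ is transmission irregular.
   Context: Let $G_2$ be the graph with vertices $a,b,c,d,e,f,g,h$ and edges $ab, ae, af, bc, bf, bg, cd, cg, dh, ef, fg, gh$. For an integer $n\ge 3$, $\mathcal{G}^2_n$ is obtained from $G_2$ by adding a new path from $e$ to $h$ with $n$ new internal vertices (a path $e,x_1,\dots,x_n,h$ of length $n+1$). The transmission of a vertex $u$ in a connected graph $G$ is $Tr_G(u)=\sum_{v}d_G(u,v)$; a graph is transmission irregular if no two of its vertices have equal transmission. *)

theory Defs
  imports Main
begin

definition walk :: "'a set \<Rightarrow> ('a \<Rightarrow> 'a \<Rightarrow> bool) \<Rightarrow> 'a list \<Rightarrow> bool" where
  "walk V E p \<longleftrightarrow> p \<noteq> [] \<and> set p \<subseteq> V \<and> (\<forall>i. Suc i < length p \<longrightarrow> E (p ! i) (p ! Suc i))"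

definition gdist :: "'a set \<Rightarrow> ('a \<Rightarrow> 'a \<Rightarrow> bool) \<Rightarrow> 'a \<Rightarrow> 'a \<Rightarrow> nat" where
  "gdist V E u v = (LEAST k. \<exists>p. walk V E p \<and> hd p = u \<and> last p = v \<and> length p = Suc k)"

definition transmission :: "'a set \<Rightarrow> ('a \<Rightarrow> 'a \<Rightarrow> bool) \<Rightarrow> 'a \<Rightarrow> nat" where
  "transmission V E u = (\<Sum>v\<in>V. gdist V E u v)"

definition transmission_irregular :: "'a set \<Rightarrow> ('a \<Rightarrow> 'a \<Rightarrow> bool) \<Rightarrow> bool" where
  "transmission_irregular V E \<longleftrightarrow> inj_on (transmission V E) V"

(* Encoding of G_2: a=0, b=1, c=2, d=3, e=4, f=5, g=6, h=7;
   new path vertices x_1,...,x_n are 8,...,n+7. *)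
definition G2_edges :: "nat set set" where
  "G2_edges = {{0,1},{0,4},{0,5},{1,2},{1,5},{1,6},{2,3},{2,6},{3,7},{4,5},{5,6},{6,7}}"

definition calG2_edges :: "nat \<Rightarrow> nat set set" where
  "calG2_edges n = G2_edges \<union> {{4, 8}} \<union> {{i, Suc i} | i. 8 \<le> i \<and> i < n + 7} \<union> {{n + 7, 7}}"

definition calG2_V :: "nat \<Rightarrow> nat set" where
  "calG2_V n = {0..<n + 8}"

definition calG2_adj :: "nat \<Rightarrow> nat \<Rightarrow> nat \<Rightarrow> bool" where
  "calG2_adj n u v \<longleftrightarrow> u \<noteq> v \<and> {u, v} \<in> calG2_edges n"

end

(*
  The graph consists of the cycle e, x_1, ..., x_n, h, g, f of length N = n + 4 and the path
  a b c d, each of whose vertices is joined to one or two consecutive cycle vertices. Its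
  distances are explicit: cyclic distance on the cycle, path distance on a b c d, and from an
  off-cycle vertex to a cycle vertex one more than the cyclic distance to the nearest attachment
  point. The formula is certified by a potential argument: it vanishes only at the source,
  changes by at most one along every edge, and decreases along some edge into every other vertex.

  For n = 4m + 1 the cycle is odd, N = 2K + 1 with K = 2m + 2, so all cycle vertices have the
  same transmission K(K + 1) within the cycle. The transmissions of cycle vertices therefore
  differ only by their distances to a, b, c, d, a piecewise linear function of the position whose
  values are pairwise distinct (the two long linear pieces lie in different classes mod 4) and odd
  at only two positions; the corresponding excesses of a, b, c, d are odd and avoid these two values.
*)
theory Submission
  imports Defs
begin

section \<open>Distances certified by potentials\<close>

lemma walk_snoc:
  assumes "walk V E p" "x \<in> V" "E (last p) x"
  shows "walk V E (p @ [x])"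
  unfolding walk_def
proof (intro conjI allI impI)
  show "p @ [x] \<noteq> []" "set (p @ [x]) \<subseteq> V" using assms by (auto simp: walk_def)
next
  fix i assume i: "Suc i < length (p @ [x])"
  show "E ((p @ [x]) ! i) ((p @ [x]) ! Suc i)"
  proof (cases "Suc i < length p")
    case True
    then show ?thesis using assms(1) by (simp add: walk_def nth_append)
  next
    case False
    then have "i = length p - 1" "p \<noteq> []" using i assms(1) by (auto simp: walk_def)
    then show ?thesis using assms(3) by (simp add: nth_append last_conv_nth)
  qed
qed

lemma walk_snocD:
  assumes "walk V E (p @ [x])" "p \<noteq> []"
  shows "walk V E p" "E (last p) x"
proof -
  have step: "E ((p @ [x]) ! i) ((p @ [x]) ! Suc i)" if "i < length p" for i
    using assms(1) that by (simp add: walk_def)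
  have "E (p ! i) (p ! Suc i)" if "Suc i < length p" for i
    using step[of i] that by (simp add: nth_append)
  then show "walk V E p"
    using assms by (auto simp: walk_def)
  show "E (last p) x"
    using step[of "length p - 1"] assms(2) by (simp add: nth_append last_conv_nth)
qed

lemma walk_length_lower_bound:
  assumes lip: "\<And>x y. x \<in> V \<Longrightarrow> y \<in> V \<Longrightarrow> E x y \<Longrightarrow> D y \<le> D x + 1"
    and "D u = 0"
  shows "walk V E p \<Longrightarrow> hd p = u \<Longrightarrow> D (last p) + 1 \<le> length p"
proof (induction p rule: rev_induct)
  case Nil
  then show ?case by (simp add: walk_def)
next
  case (snoc x p)
  show ?case
  proof (cases "p = []")
    case True
    then show ?thesis using snoc.prems \<open>D u = 0\<close> by simp
  next
    case False
    have "walk V E p" "E (last p) x" using walk_snocD[OF snoc.prems(1) False] by auto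
    moreover have "last p \<in> V" "x \<in> V" using snoc.prems(1) False by (auto simp: walk_def)
    ultimately show ?thesis using snoc False lip by fastforce
  qed
qed

lemma gdist_eqI:
  assumes "u \<in> V" "v \<in> V" "D u = 0"
    and zero: "\<And>x. x \<in> V \<Longrightarrow> D x = 0 \<Longrightarrow> x = u"
    and lip: "\<And>x y. x \<in> V \<Longrightarrow> y \<in> V \<Longrightarrow> E x y \<Longrightarrow> D y \<le> D x + 1"
    and descent: "\<And>x. x \<in> V \<Longrightarrow> 0 < D x \<Longrightarrow> \<exists>y\<in>V. E y x \<and> D y < D x"
  shows "gdist V E u v = D v"
proof -
  have walk_ex: "\<exists>p. walk V E p \<and> hd p = u \<and> last p = x \<and> length p = Suc k"
    if "x \<in> V" "D x = k" for x k
    using that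
  proof (induction k arbitrary: x)
    case 0
    then show ?case using zero \<open>u \<in> V\<close> by (intro exI[of _ "[u]"]) (auto simp: walk_def)
  next
    case (Suc k)
    then obtain y where y: "y \<in> V" "E y x" "D y < D x" using descent by fastforce
    with Suc.prems lip[OF y(1) Suc.prems(1) y(2)] have "D y = k" by simp
    then obtain p where p: "walk V E p" "hd p = u" "last p = y" "length p = Suc k"
      using Suc.IH y(1) by blast
    moreover have "p \<noteq> []" using p(4) by auto
    ultimately show ?case
      using y Suc.prems(1) by (intro exI[of _ "p @ [x]"]) (simp add: walk_snoc)
  qed
  show ?thesis unfolding gdist_def
  proof (rule Least_equality)
    show "\<exists>p. walk V E p \<and> hd p = u \<and> last p = v \<and> length p = Suc (D v)"
      using walk_ex \<open>v \<in> V\<close> by blast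
  next
    fix k assume "\<exists>p. walk V E p \<and> hd p = u \<and> last p = v \<and> length p = Suc k"
    then show "D v \<le> k" using walk_length_lower_bound[of V E D u, OF lip \<open>D u = 0\<close>] by fastforce
  qed
qed

section \<open>Cyclic distance\<close>

definition cyc_succ :: "nat \<Rightarrow> nat \<Rightarrow> nat" where
  "cyc_succ N q = (if Suc q = N then 0 else Suc q)"

definition cyc_pred :: "nat \<Rightarrow> nat \<Rightarrow> nat" where
  "cyc_pred N q = (if q = 0 then N - 1 else q - 1)"

definition cyc_offset :: "nat \<Rightarrow> nat \<Rightarrow> nat \<Rightarrow> nat" where
  "cyc_offset N p q = (if p \<le> q then q - p else N + q - p)"

definition cyc_norm :: "nat \<Rightarrow> nat \<Rightarrow> nat" where
  "cyc_norm N r = min r (N - r)"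

definition cyc_dist :: "nat \<Rightarrow> nat \<Rightarrow> nat \<Rightarrow> nat" where
  "cyc_dist N p q = cyc_norm N (cyc_offset N p q)"

lemma cyc_succ_less: "q < N \<Longrightarrow> cyc_succ N q < N"
  by (simp add: cyc_succ_def)

lemma cyc_pred_less: "q < N \<Longrightarrow> cyc_pred N q < N"
  by (auto simp: cyc_pred_def)

lemma cyc_succ_pred: "q < N \<Longrightarrow> cyc_succ N (cyc_pred N q) = q"
  by (auto simp: cyc_succ_def cyc_pred_def)

lemma cyc_offset_less: "p < N \<Longrightarrow> q < N \<Longrightarrow> cyc_offset N p q < N"
  by (auto simp: cyc_offset_def)

lemma cyc_offset_succ:
  "p < N \<Longrightarrow> q < N \<Longrightarrow> cyc_offset N p (cyc_succ N q) = cyc_succ N (cyc_offset N p q)"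
  by (auto simp: cyc_offset_def cyc_succ_def)

lemma cyc_offset_pred:
  "p < N \<Longrightarrow> q < N \<Longrightarrow> cyc_offset N p (cyc_pred N q) = cyc_pred N (cyc_offset N p q)"
  by (auto simp: cyc_offset_def cyc_pred_def)

lemma cyc_offset_succ_left:
  "p < N \<Longrightarrow> q < N \<Longrightarrow> cyc_offset N (cyc_succ N p) q = cyc_pred N (cyc_offset N p q)"
  by (auto simp: cyc_offset_def cyc_succ_def cyc_pred_def)

lemma cyc_norm_succ:
  assumes "r < N"
  shows "cyc_norm N (cyc_succ N r) \<le> cyc_norm N r + 1" "cyc_norm N r \<le> cyc_norm N (cyc_succ N r) + 1"
  using assms by (auto simp: cyc_norm_def cyc_succ_def)

lemma cyc_norm_descent:
  "0 < r \<Longrightarrow> r < N \<Longrightarrow>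
    cyc_norm N (cyc_succ N r) < cyc_norm N r \<or> cyc_norm N (cyc_pred N r) < cyc_norm N r"
  by (auto simp: cyc_norm_def cyc_succ_def cyc_pred_def)

lemma cyc_dist_self [simp]: "cyc_dist N p p = 0"
  by (simp add: cyc_dist_def cyc_offset_def cyc_norm_def)

lemma cyc_dist_commute: "p < N \<Longrightarrow> q < N \<Longrightarrow> cyc_dist N p q = cyc_dist N q p"
  by (auto simp: cyc_dist_def cyc_offset_def cyc_norm_def)

lemma cyc_dist_eq_0_iff: "p < N \<Longrightarrow> q < N \<Longrightarrow> cyc_dist N p q = 0 \<longleftrightarrow> p = q"
  by (auto simp: cyc_dist_def cyc_offset_def cyc_norm_def)

lemma cyc_dist_succ:
  assumes "p < N" "q < N"
  shows "cyc_dist N p (cyc_succ N q) \<le> cyc_dist N p q + 1"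
    and "cyc_dist N p q \<le> cyc_dist N p (cyc_succ N q) + 1"
  using cyc_norm_succ[OF cyc_offset_less[OF assms]] by (simp_all add: cyc_dist_def cyc_offset_succ[OF assms])

lemma cyc_dist_descent:
  assumes "p < N" "q < N" "p \<noteq> q"
  shows "cyc_dist N p (cyc_succ N q) < cyc_dist N p q \<or> cyc_dist N p (cyc_pred N q) < cyc_dist N p q"
proof -
  have "0 < cyc_offset N p q" using assms by (auto simp: cyc_offset_def)
  then show ?thesis
    using cyc_norm_descent[OF _ cyc_offset_less] assms
    by (simp add: cyc_dist_def cyc_offset_succ cyc_offset_pred)
qed

lemma sum_cyc_offset:
  assumes "p < N"
  shows "(\<Sum>q<N. f (cyc_offset N p q)) = (\<Sum>r<N. f r)"
  by (rule sum.reindex_bij_witness[where i = "\<lambda>r. if p + r < N then p + r else p + r - N"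
        and j = "cyc_offset N p"])
     (use assms in \<open>auto simp: cyc_offset_def\<close>)

lemma sum_lessThan_odd_split:
  "(\<Sum>r<2*K+1. f r) = (\<Sum>r\<le>K. f r) + (\<Sum>j<K. f (2*K - j))" for K :: nat
proof -
  have "{..<2*K+1} = {..K} \<union> {K<..<2*K+1}" "{..K} \<inter> {K<..<2*K+1} = {}" by auto
  then have "(\<Sum>r<2*K+1. f r) = (\<Sum>r\<le>K. f r) + (\<Sum>r\<in>{K<..<2*K+1}. f r)"
    by (simp add: sum.union_disjoint)
  also have "(\<Sum>r\<in>{K<..<2*K+1}. f r) = (\<Sum>j<K. f (2*K - j))"
    by (rule sum.reindex_bij_witness[where i = "\<lambda>r. 2*K - r" and j = "\<lambda>j. 2*K - j"]) auto
  finally show ?thesis .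
qed

lemma sum_cyc_norm: "(\<Sum>r<2*K+1. cyc_norm (2*K+1) r) = K * (K + 1)"
proof -
  have "(\<Sum>r<2*K+1. cyc_norm (2*K+1) r) = (\<Sum>r\<le>K. r) + (\<Sum>j<K. Suc j)"
    unfolding sum_lessThan_odd_split by (intro arg_cong2[where f = "(+)"] sum.cong) (auto simp: cyc_norm_def)
  also have "\<dots> = K * (K + 1)"
    by (induction K) auto
  finally show ?thesis .
qed

lemma sum_min_cyc_norm_pred:
  "(\<Sum>r<2*K+1. min (cyc_norm (2*K+1) r) (cyc_norm (2*K+1) (cyc_pred (2*K+1) r))) = K * K"
proof -
  have "(\<Sum>r<2*K+1. min (cyc_norm (2*K+1) r) (cyc_norm (2*K+1) (cyc_pred (2*K+1) r)))
      = (\<Sum>r\<le>K. r - 1) + (\<Sum>j<K. Suc j)"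
    unfolding sum_lessThan_odd_split
    by (intro arg_cong2[where f = "(+)"] sum.cong) (auto simp: cyc_norm_def cyc_pred_def)
  also have "\<dots> = K * K"
    by (induction K) auto
  finally show ?thesis .
qed

lemma sum_cyc_dist:
  assumes "p < 2*K+1"
  shows "(\<Sum>q<2*K+1. cyc_dist (2*K+1) p q) = K * (K + 1)"
  unfolding cyc_dist_def sum_cyc_offset[OF assms] by (rule sum_cyc_norm)

lemma sum_min_cyc_dist_succ:
  assumes a: "a < 2*K+1"
  shows "(\<Sum>q<2*K+1. min (cyc_dist (2*K+1) q a) (cyc_dist (2*K+1) q (cyc_succ (2*K+1) a))) = K * K"
    (is "(\<Sum>q<?N. ?f q) = _")
proof -
  have "?f q = min (cyc_norm ?N (cyc_offset ?N a q)) (cyc_norm ?N (cyc_pred ?N (cyc_offset ?N a q)))"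
    if "q < ?N" for q
    using that a cyc_dist_commute[OF that] cyc_dist_commute[OF that cyc_succ_less[OF a]]
    by (simp add: cyc_dist_def cyc_offset_succ_left)
  then have "(\<Sum>q<?N. ?f q)
      = (\<Sum>q<?N. min (cyc_norm ?N (cyc_offset ?N a q)) (cyc_norm ?N (cyc_pred ?N (cyc_offset ?N a q))))"
    by (intro sum.cong) auto
  also have "\<dots> = (\<Sum>r<?N. min (cyc_norm ?N r) (cyc_norm ?N (cyc_pred ?N r)))"
    by (rule sum_cyc_offset[OF a])
  also have "\<dots> = K * K"
    by (rule sum_min_cyc_norm_pred)
  finally show ?thesis .
qed

(* Cycle positions: e is 0, x_q is q for 1 \<le> q \<le> n, and h, g, f are n + 1, n + 2, n + 3. *)
definition cyc_vertex :: "nat \<Rightarrow> nat \<Rightarrow> nat" where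
  "cyc_vertex n q = (if q = 0 then 4 else if q \<le> n then q + 7 else if q = n + 1 then 7
     else if q = n + 2 then 6 else 5)"

definition cyc_pos :: "nat \<Rightarrow> nat \<Rightarrow> nat" where
  "cyc_pos n v = (if v = 4 then 0 else if v = 5 then n + 3 else if v = 6 then n + 2
     else if v = 7 then n + 1 else v - 7)"

(* The cycle positions adjacent to the path vertex k: a to f and e, b to g and f, c to g, d to h. *)
definition attach :: "nat \<Rightarrow> nat \<Rightarrow> nat" where
  "attach n k = (if k = 0 then n + 3 else if k \<le> 2 then n + 2 else n + 1)"

definition attach' :: "nat \<Rightarrow> nat \<Rightarrow> nat" where
  "attach' n k = (if k < 2 then cyc_succ (n + 4) (attach n k) else attach n k)"

lemma cyc_pos_less: "4 \<le> v \<Longrightarrow> v < n + 8 \<Longrightarrow> cyc_pos n v < n + 4"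
  by (auto simp: cyc_pos_def)

lemma cyc_vertex_pos: "4 \<le> v \<Longrightarrow> v < n + 8 \<Longrightarrow> cyc_vertex n (cyc_pos n v) = v"
  by (auto simp: cyc_pos_def cyc_vertex_def)

lemma cyc_pos_vertex [simp]: "q < n + 4 \<Longrightarrow> cyc_pos n (cyc_vertex n q) = q"
  by (simp add: cyc_pos_def cyc_vertex_def)

lemma cyc_vertex_range: "q < n + 4 \<Longrightarrow> 4 \<le> cyc_vertex n q \<and> cyc_vertex n q < n + 8"
  by (simp add: cyc_vertex_def)

lemma attach_less: "attach n k < n + 4" "attach' n k < n + 4"
  by (simp_all add: attach_def attach'_def cyc_succ_def)

lemma calG2_V_eq: "calG2_V n = {..<n + 8}"
  by (auto simp: calG2_V_def)

lemma calG2_adj_sym: "calG2_adj n u v \<Longrightarrow> calG2_adj n v u"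
  by (auto simp: calG2_adj_def insert_commute)

lemma calG2_adj_cases:
  assumes adj: "calG2_adj n u v" and n: "1 \<le> n"
  obtains (path) "u < 4" "v < 4" "u = Suc v \<or> v = Suc u"
  | (attach_left) "u < 4" "4 \<le> v" "v < n + 8" "cyc_pos n v = attach n u \<or> cyc_pos n v = attach' n u"
  | (attach_right) "v < 4" "4 \<le> u" "u < n + 8" "cyc_pos n u = attach n v \<or> cyc_pos n u = attach' n v"
  | (cycle) "4 \<le> u" "4 \<le> v" "u < n + 8" "v < n + 8"
      "cyc_pos n v = cyc_succ (n + 4) (cyc_pos n u) \<or> cyc_pos n u = cyc_succ (n + 4) (cyc_pos n v)"
proof -
  from adj have "{u, v} \<in> G2_edges \<or> {u, v} = {4, 8} \<or> {u, v} = {n + 7, 7}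
      \<or> (\<exists>i. {u, v} = {i, Suc i} \<and> 8 \<le> i \<and> i < n + 7)"
    by (auto simp: calG2_adj_def calG2_edges_def)
  then show thesis
    unfolding G2_edges_def insert_iff empty_iff doubleton_eq_iff
    by (elim disjE conjE exE)
      ((rule path; force) | (rule attach_left; force simp: cyc_pos_def attach_def attach'_def cyc_succ_def)
        | (rule attach_right; force simp: cyc_pos_def attach_def attach'_def cyc_succ_def)
        | (rule cycle; use n in \<open>auto simp: cyc_pos_def cyc_succ_def\<close>; arith))+
qed

lemma calG2_adj_G2I: "{u, v} \<in> G2_edges \<Longrightarrow> u \<noteq> v \<Longrightarrow> calG2_adj n u v"
  by (simp add: calG2_adj_def calG2_edges_def)

lemma calG2_adj_path: "k < 3 \<Longrightarrow> calG2_adj n k (Suc k)"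
  by (rule calG2_adj_G2I) (auto simp: G2_edges_def doubleton_eq_iff less_Suc_eq numeral_eq_Suc)

lemma calG2_adj_attach:
  assumes "k < 4"
  shows "calG2_adj n k (cyc_vertex n (attach n k))" "calG2_adj n k (cyc_vertex n (attach' n k))"
  using assms
  by (auto simp: G2_edges_def doubleton_eq_iff less_Suc_eq numeral_eq_Suc cyc_vertex_def attach_def
      attach'_def cyc_succ_def intro!: calG2_adj_G2I)

lemma calG2_adj_cycle:
  assumes "1 \<le> n" "q < n + 4"
  shows "calG2_adj n (cyc_vertex n q) (cyc_vertex n (cyc_succ (n + 4) q))"
  using assms
  by (auto simp: calG2_adj_def calG2_edges_def G2_edges_def cyc_vertex_def cyc_succ_def doubleton_eq_iff)

lemma calG2_cycle_descent:
  assumes n: "1 \<le> n" and p: "p < n + 4" and q: "q < n + 4" and "p \<noteq> q"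
  obtains q' where "q' < n + 4" "calG2_adj n (cyc_vertex n q') (cyc_vertex n q)"
    "cyc_dist (n + 4) p q' < cyc_dist (n + 4) p q"
proof -
  have "calG2_adj n (cyc_vertex n (cyc_succ (n + 4) q)) (cyc_vertex n q)"
    using calG2_adj_cycle[OF n q] by (rule calG2_adj_sym)
  moreover have "calG2_adj n (cyc_vertex n (cyc_pred (n + 4) q)) (cyc_vertex n q)"
    using calG2_adj_cycle[OF n cyc_pred_less[OF q]] by (simp add: cyc_succ_pred[OF q])
  ultimately show thesis
    using cyc_dist_descent[OF p q \<open>p \<noteq> q\<close>] that cyc_succ_less[OF q] cyc_pred_less[OF q] by blast
qed

section \<open>Distances in the graph\<close>

definition off_dist :: "nat \<Rightarrow> nat \<Rightarrow> nat \<Rightarrow> nat" where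
  "off_dist n k p = min (cyc_dist (n + 4) p (attach n k)) (cyc_dist (n + 4) p (attach' n k)) + 1"

lemma off_dist_nearest_attach:
  obtains a where "a = attach n k \<or> a = attach' n k" "off_dist n k p = cyc_dist (n + 4) p a + 1"
  by (metis off_dist_def min_def)

lemma off_dist_attach:
  assumes "p < n + 4" "a = attach n k \<or> a = attach' n k"
  shows "cyc_dist (n + 4) p a \<le> off_dist n k p" "off_dist n k p \<le> cyc_dist (n + 4) p a + 1"
proof -
  have "cyc_dist (n + 4) p (attach n k) \<le> cyc_dist (n + 4) p (attach' n k) + 1 \<and>
      cyc_dist (n + 4) p (attach' n k) \<le> cyc_dist (n + 4) p (attach n k) + 1"
    using cyc_dist_succ[OF assms(1) attach_less(1)] by (simp add: attach'_def)
  then show "cyc_dist (n + 4) p a \<le> off_dist n k p" "off_dist n k p \<le> cyc_dist (n + 4) p a + 1"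
    using assms(2) by (auto simp: off_dist_def)
qed

lemma off_dist_succ:
  assumes "q < n + 4"
  shows "off_dist n k (cyc_succ (n + 4) q) \<le> off_dist n k q + 1"
    and "off_dist n k q \<le> off_dist n k (cyc_succ (n + 4) q) + 1"
  using cyc_dist_succ[OF attach_less(1)[of n k] assms] cyc_dist_succ[OF attach_less(2)[of n k] assms]
    assms cyc_succ_less[OF assms]
  by (auto simp: off_dist_def cyc_dist_commute[OF _ attach_less(1)] cyc_dist_commute[OF _ attach_less(2)])

lemma off_dist_path:
  assumes "k < 3" "p < n + 4"
  shows "off_dist n (Suc k) p \<le> off_dist n k p + 1" "off_dist n k p \<le> off_dist n (Suc k) p + 1"
  using assms cyc_dist_succ[OF assms(2), of "n + 1"] cyc_dist_succ[OF assms(2), of "n + 2"]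
    cyc_dist_succ[OF assms(2), of "n + 3"]
  by (auto simp: off_dist_def attach_def attach'_def cyc_succ_def less_Suc_eq numeral_eq_Suc)

lemma off_dist_attach_path:
  assumes n: "3 \<le> n" and "k < 4" "j < 4" "a = attach n j \<or> a = attach' n j"
  shows "(k - j) + (j - k) \<le> off_dist n k a" "off_dist n k a \<le> (k - j) + (j - k) + 1"
proof -
  have "k = 0 \<or> k = 1 \<or> k = 2 \<or> k = 3" "j = 0 \<or> j = 1 \<or> j = 2 \<or> j = 3"
    using assms by auto
  then show "(k - j) + (j - k) \<le> off_dist n k a" "off_dist n k a \<le> (k - j) + (j - k) + 1"
    using assms(4) n
    by (elim disjE; simp add: off_dist_def attach_def attach'_def cyc_succ_def cyc_dist_def cyc_offset_def
        cyc_norm_def)+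
qed

(* On nat, (u - v) + (v - u) is the absolute difference of u and v. *)
definition calG2_dist :: "nat \<Rightarrow> nat \<Rightarrow> nat \<Rightarrow> nat" where
  "calG2_dist n u v =
    (if u < 4 \<and> v < 4 then (u - v) + (v - u)
     else if u < 4 then off_dist n u (cyc_pos n v)
     else if v < 4 then off_dist n v (cyc_pos n u)
     else cyc_dist (n + 4) (cyc_pos n u) (cyc_pos n v))"

lemma calG2_dist_cyc_vertex_right:
  "q < n + 4 \<Longrightarrow> calG2_dist n u (cyc_vertex n q)
    = (if u < 4 then off_dist n u q else cyc_dist (n + 4) (cyc_pos n u) q)"
  using cyc_vertex_range[of q n] by (simp add: calG2_dist_def)

lemma calG2_dist_cyc_vertex_left:
  "p < n + 4 \<Longrightarrow> calG2_dist n (cyc_vertex n p) v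
    = (if v < 4 then off_dist n v p else cyc_dist (n + 4) p (cyc_pos n v))"
  using cyc_vertex_range[of p n] by (simp add: calG2_dist_def)

lemma calG2_dist_self: "calG2_dist n u u = 0"
  by (simp add: calG2_dist_def)

lemma calG2_dist_eq_0D:
  assumes "u < n + 8" "v < n + 8" "calG2_dist n u v = 0"
  shows "v = u"
proof (cases "u < 4 \<or> v < 4")
  case True
  then show ?thesis using assms(3) by (auto simp: calG2_dist_def off_dist_def split: if_splits)
next
  case False
  then have "cyc_pos n u = cyc_pos n v"
    using assms cyc_dist_eq_0_iff[OF cyc_pos_less cyc_pos_less] by (auto simp: calG2_dist_def)
  then show ?thesis using False assms(1,2) cyc_vertex_pos by (metis not_less)
qed

lemma calG2_dist_adj_off_source:
  assumes n: "3 \<le> n" and u: "u < 4" and adj: "calG2_adj n x y"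
  shows "calG2_dist n u y \<le> calG2_dist n u x + 1 \<and> calG2_dist n u x \<le> calG2_dist n u y + 1"
proof -
  have "1 \<le> n" using n by simp
  with adj show ?thesis
  proof (cases rule: calG2_adj_cases)
    case attach_left
    then show ?thesis using u off_dist_attach_path[OF n u, of x "cyc_pos n y"]
      by (auto simp: calG2_dist_def)
  next
    case attach_right
    then show ?thesis using u off_dist_attach_path[OF n u, of y "cyc_pos n x"]
      by (auto simp: calG2_dist_def)
  next
    case cycle
    then show ?thesis using u off_dist_succ[OF cyc_pos_less, of x n u] off_dist_succ[OF cyc_pos_less, of y n u]
      by (auto simp: calG2_dist_def)
  qed (use u in \<open>auto simp: calG2_dist_def\<close>)
qed

lemma calG2_dist_adj_cycle_source:
  assumes n: "1 \<le> n" and p: "p < n + 4" and adj: "calG2_adj n x y"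
  shows "calG2_dist n (cyc_vertex n p) y \<le> calG2_dist n (cyc_vertex n p) x + 1
    \<and> calG2_dist n (cyc_vertex n p) x \<le> calG2_dist n (cyc_vertex n p) y + 1"
  using adj n
proof (cases rule: calG2_adj_cases)
  case path
  then show ?thesis using p off_dist_path[OF _ p, of x] off_dist_path[OF _ p, of y]
    by (auto simp: calG2_dist_cyc_vertex_left)
next
  case attach_left
  then show ?thesis using p off_dist_attach[OF p, of "cyc_pos n y" x]
    by (auto simp: calG2_dist_cyc_vertex_left)
next
  case attach_right
  then show ?thesis using p off_dist_attach[OF p, of "cyc_pos n x" y]
    by (auto simp: calG2_dist_cyc_vertex_left)
next
  case cycle
  then show ?thesis using p cyc_dist_succ[OF p cyc_pos_less, of x] cyc_dist_succ[OF p cyc_pos_less, of y]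
    by (auto simp: calG2_dist_cyc_vertex_left)
qed

lemma calG2_dist_adj_le:
  assumes n: "3 \<le> n" and u: "u < n + 8" and adj: "calG2_adj n x y"
  shows "calG2_dist n u y \<le> calG2_dist n u x + 1"
proof (cases "u < 4")
  case True
  then show ?thesis using calG2_dist_adj_off_source[OF n True adj] by simp
next
  case False
  then have "u = cyc_vertex n (cyc_pos n u)" "cyc_pos n u < n + 4"
    using u cyc_vertex_pos cyc_pos_less by simp_all
  then show ?thesis using calG2_dist_adj_cycle_source[OF _ _ adj] n by (metis le_trans one_le_numeral)
qed

lemma calG2_dist_descent_off_source:
  assumes n: "1 \<le> n" and u: "u < 4" and x: "x < n + 8" and pos: "0 < calG2_dist n u x"
  shows "\<exists>y < n + 8. calG2_adj n y x \<and> calG2_dist n u y < calG2_dist n u x"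
proof (cases "x < 4")
  case True
  define y where "y = (if u < x then x - 1 else Suc x)"
  have "x \<noteq> u" using pos u True by (auto simp: calG2_dist_def)
  then have "calG2_adj n y x"
    using calG2_adj_path[of "x - 1" n] calG2_adj_path[of x n] calG2_adj_sym True u
    by (auto simp: y_def)
  moreover have "y < n + 8" "calG2_dist n u y < calG2_dist n u x"
    using \<open>x \<noteq> u\<close> True u by (auto simp: y_def calG2_dist_def)
  ultimately show ?thesis by blast
next
  case False
  define q where "q = cyc_pos n x"
  have q: "q < n + 4" and xq: "x = cyc_vertex n q"
    using False x cyc_pos_less cyc_vertex_pos by (auto simp: q_def)
  obtain a where a: "a = attach n u \<or> a = attach' n u" "off_dist n u q = cyc_dist (n + 4) q a + 1"
    by (rule off_dist_nearest_attach)
  have a_less: "a < n + 4" using a(1) attach_less by auto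
  have dist_x: "calG2_dist n u x = cyc_dist (n + 4) a q + 1"
    using u q a(2) cyc_dist_commute[OF q a_less] by (simp add: xq calG2_dist_cyc_vertex_right)
  show ?thesis
  proof (cases "q = a")
    case True
    then have "calG2_adj n u x" using calG2_adj_attach[OF u] a(1) xq by auto
    then show ?thesis using u dist_x by (intro exI[of _ u]) (auto simp: calG2_dist_self)
  next
    case False
    then obtain q' where q': "q' < n + 4" "calG2_adj n (cyc_vertex n q') x"
      "cyc_dist (n + 4) a q' < cyc_dist (n + 4) a q"
      using calG2_cycle_descent[OF n a_less q] xq by metis
    have "calG2_dist n u (cyc_vertex n q') \<le> cyc_dist (n + 4) a q' + 1"
      using u off_dist_attach(2)[OF q'(1) a(1)] cyc_dist_commute[OF q'(1) a_less]
      by (simp add: calG2_dist_cyc_vertex_right q'(1))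
    then show ?thesis using q' dist_x cyc_vertex_range[OF q'(1)]
      by (intro exI[of _ "cyc_vertex n q'"]) auto
  qed
qed

lemma calG2_dist_descent_cycle_source:
  assumes n: "1 \<le> n" and p: "p < n + 4" and x: "x < n + 8"
    and pos: "0 < calG2_dist n (cyc_vertex n p) x"
  shows "\<exists>y < n + 8. calG2_adj n y x
    \<and> calG2_dist n (cyc_vertex n p) y < calG2_dist n (cyc_vertex n p) x"
proof (cases "x < 4")
  case True
  obtain a where a: "a = attach n x \<or> a = attach' n x" "off_dist n x p = cyc_dist (n + 4) p a + 1"
    by (rule off_dist_nearest_attach)
  have "a < n + 4" using a(1) attach_less by auto
  then have "calG2_adj n (cyc_vertex n a) x"
    "calG2_dist n (cyc_vertex n p) (cyc_vertex n a) < calG2_dist n (cyc_vertex n p) x"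
    using calG2_adj_attach[OF True] calG2_adj_sym a p True cyc_vertex_range[OF \<open>a < n + 4\<close>]
    by (auto simp: calG2_dist_cyc_vertex_left)
  then show ?thesis using cyc_vertex_range[OF \<open>a < n + 4\<close>] by blast
next
  case False
  define q where "q = cyc_pos n x"
  have q: "q < n + 4" and xq: "x = cyc_vertex n q"
    using False x cyc_pos_less cyc_vertex_pos by (auto simp: q_def)
  have "p \<noteq> q" using pos p q cyc_vertex_range[OF q] by (auto simp: xq calG2_dist_cyc_vertex_left)
  then obtain q' where q': "q' < n + 4" "calG2_adj n (cyc_vertex n q') x"
    "cyc_dist (n + 4) p q' < cyc_dist (n + 4) p q"
    using calG2_cycle_descent[OF n p q] xq by metis
  then show ?thesis using p q cyc_vertex_range[OF q'(1)] cyc_vertex_range[OF q]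
    by (intro exI[of _ "cyc_vertex n q'"]) (auto simp: xq calG2_dist_cyc_vertex_left)
qed

lemma calG2_dist_descent:
  assumes n: "1 \<le> n" and u: "u < n + 8" and x: "x < n + 8" and pos: "0 < calG2_dist n u x"
  shows "\<exists>y < n + 8. calG2_adj n y x \<and> calG2_dist n u y < calG2_dist n u x"
proof (cases "u < 4")
  case True
  show ?thesis by (rule calG2_dist_descent_off_source[OF n True x pos])
next
  case False
  then have "u = cyc_vertex n (cyc_pos n u)" "cyc_pos n u < n + 4"
    using u cyc_vertex_pos cyc_pos_less by simp_all
  then show ?thesis using calG2_dist_descent_cycle_source[OF n _ x] pos by metis
qed

lemma gdist_calG2:
  assumes n: "3 \<le> n" and u: "u < n + 8" and v: "v < n + 8"
  shows "gdist (calG2_V n) (calG2_adj n) u v = calG2_dist n u v"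
proof (rule gdist_eqI)
  show "u \<in> calG2_V n" "v \<in> calG2_V n" using u v by (simp_all add: calG2_V_eq)
  show "calG2_dist n u u = 0" by (rule calG2_dist_self)
next
  fix x assume "x \<in> calG2_V n" "calG2_dist n u x = 0"
  then show "x = u" using calG2_dist_eq_0D[OF u] by (simp add: calG2_V_eq)
next
  fix x y assume "calG2_adj n x y"
  then show "calG2_dist n u y \<le> calG2_dist n u x + 1" by (rule calG2_dist_adj_le[OF n u])
next
  fix x assume "x \<in> calG2_V n" "0 < calG2_dist n u x"
  then show "\<exists>y\<in>calG2_V n. calG2_adj n y x \<and> calG2_dist n u y < calG2_dist n u x"
    using calG2_dist_descent[of n u x] n u by (auto simp: calG2_V_eq)
qed

section \<open>Transmissions\<close>

lemma sum_calG2_V: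
  "(\<Sum>v\<in>calG2_V n. f v) = (\<Sum>k<4. f k) + (\<Sum>q<n + 4. f (cyc_vertex n q))"
proof -
  have "calG2_V n = {..<4} \<union> {4..<n + 8}" by (auto simp: calG2_V_eq)
  then have "(\<Sum>v\<in>calG2_V n. f v) = (\<Sum>k<4. f k) + (\<Sum>v\<in>{4..<n + 8}. f v)"
    by (simp add: sum.union_disjoint ivl_disj_int)
  also have "(\<Sum>v\<in>{4..<n + 8}. f v) = (\<Sum>q<n + 4. f (cyc_vertex n q))"
    by (rule sum.reindex_bij_witness[where i = "cyc_vertex n" and j = "cyc_pos n"])
       (auto simp: cyc_vertex_pos cyc_pos_less cyc_vertex_range)
  finally show ?thesis .
qed

lemma transmission_calG2_eq_sum:
  assumes "3 \<le> n" "u < n + 8"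
  shows "transmission (calG2_V n) (calG2_adj n) u
    = (\<Sum>k<4. calG2_dist n u k) + (\<Sum>q<n + 4. calG2_dist n u (cyc_vertex n q))"
proof -
  have "transmission (calG2_V n) (calG2_adj n) u = (\<Sum>v\<in>calG2_V n. calG2_dist n u v)"
    unfolding transmission_def using assms gdist_calG2 by (intro sum.cong) (auto simp: calG2_V_eq)
  then show ?thesis by (simp add: sum_calG2_V)
qed

lemma sum_off_dist_cycle:
  assumes N: "n + 4 = 2*K + 1" and "k < 4"
  shows "(\<Sum>q<n + 4. off_dist n k q) = (if k < 2 then K * K else K * (K + 1)) + (n + 4)"
proof -
  have "(\<Sum>q<n + 4. min (cyc_dist (n + 4) q (attach n k)) (cyc_dist (n + 4) q (attach' n k)))
      = (if k < 2 then K * K else K * (K + 1))"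
  proof (cases "k < 2")
    case True
    then show ?thesis
      using sum_min_cyc_dist_succ[of "attach n k" K] attach_less(1)[of n k] by (simp add: attach'_def N)
  next
    case False
    have "(\<Sum>q<n + 4. cyc_dist (n + 4) q (attach n k)) = (\<Sum>q<n + 4. cyc_dist (n + 4) (attach n k) q)"
      using cyc_dist_commute[OF _ attach_less(1)] by (intro sum.cong) auto
    then show ?thesis
      using False sum_cyc_dist[of "attach n k" K] attach_less(1)[of n k] by (simp add: attach'_def N)
  qed
  then show ?thesis
    unfolding off_dist_def sum.distrib by simp
qed

lemma transmission_calG2_cycle_vertex:
  assumes n: "3 \<le> n" and N: "n + 4 = 2*K + 1" and p: "p < n + 4"
  shows "transmission (calG2_V n) (calG2_adj n) (cyc_vertex n p) = (\<Sum>k<4. off_dist n k p) + K * (K + 1)"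
proof -
  have "transmission (calG2_V n) (calG2_adj n) (cyc_vertex n p)
      = (\<Sum>k<4. calG2_dist n (cyc_vertex n p) k)
        + (\<Sum>q<n + 4. calG2_dist n (cyc_vertex n p) (cyc_vertex n q))"
    using cyc_vertex_range[OF p] by (simp add: transmission_calG2_eq_sum[OF n])
  also have "(\<Sum>k<4. calG2_dist n (cyc_vertex n p) k) = (\<Sum>k<4. off_dist n k p)"
    using p by (intro sum.cong) (simp_all add: calG2_dist_cyc_vertex_left)
  also have "(\<Sum>q<n + 4. calG2_dist n (cyc_vertex n p) (cyc_vertex n q))
      = (\<Sum>q<n + 4. cyc_dist (n + 4) p q)"
    using p cyc_vertex_range[OF p] by (intro sum.cong) (simp_all add: calG2_dist_cyc_vertex_right)
  also have "\<dots> = K * (K + 1)"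
    using sum_cyc_dist[of p K] p unfolding N by simp
  finally show ?thesis .
qed

lemma transmission_calG2_off_cycle:
  assumes n: "3 \<le> n" and N: "n + 4 = 2*K + 1" and k: "k < 4"
  shows "transmission (calG2_V n) (calG2_adj n) k
    = (\<Sum>j<4. (k - j) + (j - k)) + ((if k < 2 then K * K else K * (K + 1)) + (n + 4))"
proof -
  have "transmission (calG2_V n) (calG2_adj n) k
      = (\<Sum>j<4. calG2_dist n k j) + (\<Sum>q<n + 4. calG2_dist n k (cyc_vertex n q))"
    using k by (simp add: transmission_calG2_eq_sum[OF n])
  also have "(\<Sum>j<4. calG2_dist n k j) = (\<Sum>j<4. (k - j) + (j - k))"
    using k by (intro sum.cong) (simp_all add: calG2_dist_def)
  also have "(\<Sum>q<n + 4. calG2_dist n k (cyc_vertex n q)) = (\<Sum>q<n + 4. off_dist n k q)"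
    using k by (intro sum.cong) (simp_all add: calG2_dist_cyc_vertex_right)
  also have "\<dots> = (if k < 2 then K * K else K * (K + 1)) + (n + 4)"
    by (rule sum_off_dist_cycle[OF N k])
  finally show ?thesis .
qed

lemma sum_off_dist_expand:
  "(\<Sum>k<4. off_dist n k p) = min (cyc_dist (n + 4) p (n + 3)) (cyc_dist (n + 4) p 0)
     + min (cyc_dist (n + 4) p (n + 2)) (cyc_dist (n + 4) p (n + 3))
     + cyc_dist (n + 4) p (n + 2) + cyc_dist (n + 4) p (n + 1) + 4"
  by (simp add: eval_nat_numeral off_dist_def attach_def attach'_def cyc_succ_def)

definition cycle_excess :: "nat \<Rightarrow> nat \<Rightarrow> nat" where
  "cycle_excess m p =
    (if p < 2*m then 4*p + 10 else if p = 2*m then 8*m + 9 else if p = 2*m + 1 then 8*m + 10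
     else if p \<le> 4*m + 2 then 4 * (4*m + 4 - p) else if p = 4*m + 3 then 6 else 7)"

lemma sum_off_dist_4m1:
  assumes m: "1 \<le> m" and p: "p < 4*m + 5"
  shows "(\<Sum>k<4. off_dist (4*m + 1) k p) = cycle_excess m p"
proof -
  have "p = 0 \<or> (1 \<le> p \<and> p < 2*m) \<or> p = 2*m \<or> p = 2*m + 1 \<or> p = 2*m + 2
      \<or> (2*m + 3 \<le> p \<and> p \<le> 4*m + 1) \<or> p = 4*m + 2 \<or> p = 4*m + 3 \<or> p = 4*m + 4"
    using p by linarith
  then show ?thesis
    unfolding sum_off_dist_expand using m
    by (elim disjE conjE; simp add: cyc_dist_def cyc_offset_def cyc_norm_def cycle_excess_def)
qed

lemma odd_cycle_excess:
  "odd (cycle_excess m p) \<Longrightarrow> cycle_excess m p = 7 \<or> cycle_excess m p = 8*m + 9"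
  unfolding cycle_excess_def by (auto split: if_splits)

(* Only the comparison of 4 p + 10 with 4 (4 m + 4 - q) is not linear; it is settled mod 4. *)
lemma inj_on_cycle_excess: "inj_on (cycle_excess m) {..<4*m + 5}"
proof (rule linorder_inj_onI')
  fix p q :: nat assume "p < q" "p \<in> {..<4*m + 5}" "q \<in> {..<4*m + 5}"
  then show "cycle_excess m p \<noteq> cycle_excess m q"
    unfolding cycle_excess_def
    by (auto split: if_splits) (drule arg_cong[where f = "\<lambda>x. x mod 4"], simp)
qed

definition transmission_excess :: "nat \<Rightarrow> nat \<Rightarrow> nat" where
  "transmission_excess m u =
    (if u = 0 then 2*m + 9 else if u = 1 then 2*m + 7 else if u = 2 then 4*m + 9
     else if u = 3 then 4*m + 11 else cycle_excess m (cyc_pos (4*m + 1) u))"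

lemma transmission_calG2_4m1:
  assumes m: "1 \<le> m" and u: "u < 4*m + 9"
  shows "transmission (calG2_V (4*m + 1)) (calG2_adj (4*m + 1)) u
    = (2*m + 2) * (2*m + 3) + transmission_excess m u"
proof (cases "u < 4")
  case True
  then have "u = 0 \<or> u = 1 \<or> u = 2 \<or> u = 3" by auto
  then show ?thesis
    using transmission_calG2_off_cycle[of "4*m + 1" "2*m + 2" u] m True
    by (auto simp: transmission_excess_def eval_nat_numeral algebra_simps)
next
  case False
  define p where "p = cyc_pos (4*m + 1) u"
  have p: "p < 4*m + 5" and u_eq: "u = cyc_vertex (4*m + 1) p"
    using False u cyc_pos_less[of u "4*m + 1"] cyc_vertex_pos[of u "4*m + 1"] by (auto simp: p_def)
  have "transmission (calG2_V (4*m + 1)) (calG2_adj (4*m + 1)) u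
      = (\<Sum>k<4. off_dist (4*m + 1) k p) + (2*m + 2) * (2*m + 2 + 1)"
    unfolding u_eq using m p by (intro transmission_calG2_cycle_vertex) simp_all
  also have "(\<Sum>k<4. off_dist (4*m + 1) k p) = cycle_excess m p"
    by (rule sum_off_dist_4m1[OF m p])
  finally show ?thesis
    using False by (simp add: transmission_excess_def p_def algebra_simps)
qed

lemma inj_on_transmission_excess:
  assumes m: "1 \<le> m"
  shows "inj_on (transmission_excess m) {..<4*m + 9}"
proof (rule inj_onI)
  fix u v assume u: "u \<in> {..<4*m + 9}" and v: "v \<in> {..<4*m + 9}"
    and eq: "transmission_excess m u = transmission_excess m v"
  have off_vs_cycle: "transmission_excess m w \<noteq> transmission_excess m w'" if "w < 4" "\<not> w' < 4" for w w'
  proof -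
    have "w = 0 \<or> w = 1 \<or> w = 2 \<or> w = 3" using that by auto
    then have "odd (transmission_excess m w) \<and> transmission_excess m w \<noteq> 7
        \<and> transmission_excess m w \<noteq> 8*m + 9"
      using m by (elim disjE) (simp_all add: transmission_excess_def)
    moreover have "transmission_excess m w' = cycle_excess m (cyc_pos (4*m + 1) w')"
      using that(2) by (simp add: transmission_excess_def)
    ultimately show ?thesis using odd_cycle_excess by metis
  qed
  consider "u < 4" "v < 4" | "u < 4" "\<not> v < 4" | "\<not> u < 4" "v < 4" | "\<not> u < 4" "\<not> v < 4"
    by blast
  then show "u = v"
  proof cases
    case 1
    then have "u = 0 \<or> u = 1 \<or> u = 2 \<or> u = 3" "v = 0 \<or> v = 1 \<or> v = 2 \<or> v = 3" by auto
    then show ?thesis using eq m by (elim disjE) (simp_all add: transmission_excess_def)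
  next
    case 2
    then show ?thesis using eq off_vs_cycle by blast
  next
    case 3
    then show ?thesis using eq off_vs_cycle[of v u] by simp
  next
    case 4
    then have "cyc_pos (4*m + 1) u = cyc_pos (4*m + 1) v"
      using eq inj_onD[OF inj_on_cycle_excess] cyc_pos_less[of u "4*m + 1"] cyc_pos_less[of v "4*m + 1"] u v
      by (simp add: transmission_excess_def)
    then show ?thesis using 4 u v cyc_vertex_pos[of u "4*m + 1"] cyc_vertex_pos[of v "4*m + 1"] by simp
  qed
qed

theorem proposition2:
  fixes m :: nat
  assumes "m \<ge> 1"
  shows "transmission_irregular (calG2_V (4 * m + 1)) (calG2_adj (4 * m + 1))"
proof -
  let ?V = "calG2_V (4*m + 1)"
  have "transmission ?V (calG2_adj (4*m + 1)) u = (2*m + 2) * (2*m + 3) + transmission_excess m u"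
    if "u \<in> ?V" for u
    using transmission_calG2_4m1[OF assms] that by (simp only: calG2_V_eq lessThan_iff)
  then have "inj_on (transmission ?V (calG2_adj (4*m + 1))) ?V
      \<longleftrightarrow> inj_on (\<lambda>u. (2*m + 2) * (2*m + 3) + transmission_excess m u) ?V"
    by (rule inj_on_cong)
  also have "\<dots>"
    using inj_on_transmission_excess[OF assms] by (simp add: inj_on_def calG2_V_eq)
  finally show ?thesis unfolding transmission_irregular_def .
qed

end
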